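(* Let $\mathcal C$ and $\mathcal D$ be simplifiable hyperoctahedral categories of partitions, and let $\mathcal C_{sl}$, $\mathcal D_{sl}$ denote the sets of partitions in $\mathcal C$, resp. $\mathcal D$, that are in single leg form. Then: (a) $\langle\mathcal C_{sl},\rho\rangle=\mathcal C$; (b) $\mathcal C_{sl}=\mathcal D_{sl}$ if and only if $\mathcal C=\mathcal D$; (c) $\mathcal C_{sl}\subseteq\mathcal D_{sl}$ if and only if $\mathcal C\subseteq\mathcal D$.
   Context: A partition $p\in P(k,l)$ ($k,l\ge 0$) is a partition of the disjoint union of $k$ ordered upper points $1,\dots,k$ and $l$ ordered lower points $1',\dots,l'$ into nonempty disjoint subsets called blocks; $P=\bigcup_{k,l}P(k,l)$. Operations on partitions: the tensor product $p\otimes q$ (horizontal juxtaposition, $q$ placed to the right of $p$); the composition of $p\in P(k,l)$ with $q\in P(l,m)$ (stack $p$ on top of $q$, identify the lower points of $p$ with the upper points of $q$, merge blocks connected through these middle points, then erase the middle points and any block lying entirely among them), giving a partition in $P(k,m)$; the involution $p^*$ (reflection of $p$ upside down); and rotation (moving the leftmost, resp. rightmost, point of one row to the leftmost, resp. rightmost, position of the other row, keeping the blocks). A category of partitions is a subset $\mathcal C\subseteq P$ containing the pair partition $\sqcap\in P(0,2)$ (one block consisting of two lower points) and the identity partition $|\in P(1,1)$ (one block $\{1,1'\}$), and closed under these four operations. $\langle \mathcal X,p\rangle$ denotes the smallest category containing the set $\mathcal X$ and the partition $p$. Special partitions: the four block $b_4\in P(0,4)$ (one block of four lower points); the double singleton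 $\uparrow\otimes\uparrow\in P(0,2)$ (two one-point blocks); the pair positioner $\rho\in P(3,3)$ with blocks $\{1,2,2',3'\}$ and $\{3,1'\}$. A category of partitions $\mathcal C$ is hyperoctahedral if $b_4\in\mathcal C$ and $\uparrow\otimes\uparrow\notin\mathcal C$; it is simplifiable hyperoctahedral if moreover $\rho\in\mathcal C$. Reading a partition as a word: label the blocks of $p$ by pairwise distinct letters and read the labels of the points starting at the leftmost upper point, going through the upper row from left to right and then through the lower row from right to left. A partition is in single leg form if in this word no two consecutive letters are equal (i.e. no two consecutive points in this reading order belong to the same block). *)

theory Defs
  imports Main
begin

text \<open>Points: upper points U 0, ..., U (k-1) (i.e. 1,...,k) and lower points
  L 0, ..., L (l-1) (i.e. 1',...,l').  A partition in P(k,l) is represented by the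
  equivalence relation "lies in the same block" on the point set; its blocks are
  the equivalence classes.\<close>

datatype pt = U nat | L nat

datatype part = Part nat nat "(pt \<times> pt) set"

definition points :: "nat \<Rightarrow> nat \<Rightarrow> pt set" where
  "points k l = U ` {..<k} \<union> L ` {..<l}"

fun up :: "part \<Rightarrow> nat" where "up (Part k l r) = k"
fun lo :: "part \<Rightarrow> nat" where "lo (Part k l r) = l"
fun rel :: "part \<Rightarrow> (pt \<times> pt) set" where "rel (Part k l r) = r"

definition Pkl :: "nat \<Rightarrow> nat \<Rightarrow> part set" where
  "Pkl k l = {Part k l r | r. equiv (points k l) r}"

definition Pall :: "part set" where
  "Pall = (\<Union>k l. Pkl k l)"

definition of_blocks :: "nat \<Rightarrow> nat \<Rightarrow> pt set set \<Rightarrow> part" where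
  "of_blocks k l B = Part k l (\<Union>b\<in>B. b \<times> b)"

definition map_rel :: "('a \<Rightarrow> 'b) \<Rightarrow> ('a \<times> 'a) set \<Rightarrow> ('b \<times> 'b) set" where
  "map_rel f r = (\<lambda>(a, b). (f a, f b)) ` r"

fun shift_pt :: "nat \<Rightarrow> nat \<Rightarrow> pt \<Rightarrow> pt" where
  "shift_pt k l (U i) = U (i + k)"
| "shift_pt k l (L j) = L (j + l)"

fun tensor :: "part \<Rightarrow> part \<Rightarrow> part" where
  "tensor (Part k l r) (Part k' l' r') =
     Part (k + k') (l + l') (r \<union> map_rel (shift_pt k l) r')"

fun flip_pt :: "pt \<Rightarrow> pt" where
  "flip_pt (U i) = L i"
| "flip_pt (L j) = U j"

fun involution :: "part \<Rightarrow> part" where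
  "involution (Part k l r) = Part l k (map_rel flip_pt r)"

text \<open>Composition: p on top of q; points of the stacked picture.\<close>
datatype cpt = CU nat | CM nat | CL nat

fun top_pt :: "pt \<Rightarrow> cpt" where
  "top_pt (U i) = CU i"
| "top_pt (L j) = CM j"

fun bot_pt :: "pt \<Rightarrow> cpt" where
  "bot_pt (U j) = CM j"
| "bot_pt (L j) = CL j"

fun out_pt :: "pt \<Rightarrow> cpt" where
  "out_pt (U i) = CU i"
| "out_pt (L j) = CL j"

text \<open>compose p q (for p in P(k,l), q in P(l,m)) is in P(k,m): blocks connected through
  the middle points are merged (transitive closure), then middle points are erased.\<close>
fun compose :: "part \<Rightarrow> part \<Rightarrow> part" where
  "compose (Part k l r) (Part l' m s) =
     Part k m {(a, b). a \<in> points k m \<and> b \<in> points k m \<and>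
        (out_pt a, out_pt b) \<in> (map_rel top_pt r \<union> map_rel bot_pt s)\<^sup>*}"

fun rotLU_pt :: "pt \<Rightarrow> pt" where
  "rotLU_pt (U i) = (if i = 0 then L 0 else U (i - 1))"
| "rotLU_pt (L j) = L (j + 1)"

fun rotLL_pt :: "pt \<Rightarrow> pt" where
  "rotLL_pt (L j) = (if j = 0 then U 0 else L (j - 1))"
| "rotLL_pt (U i) = U (i + 1)"

fun rotRU_pt :: "nat \<Rightarrow> nat \<Rightarrow> pt \<Rightarrow> pt" where
  "rotRU_pt k l (U i) = (if i = k - 1 then L l else U i)"
| "rotRU_pt k l (L j) = L j"

fun rotRL_pt :: "nat \<Rightarrow> nat \<Rightarrow> pt \<Rightarrow> pt" where
  "rotRL_pt k l (L j) = (if j = l - 1 then U k else L j)"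
| "rotRL_pt k l (U i) = U i"

fun rotLU :: "part \<Rightarrow> part" where
  "rotLU (Part k l r) = Part (k - 1) (l + 1) (map_rel rotLU_pt r)"
fun rotLL :: "part \<Rightarrow> part" where
  "rotLL (Part k l r) = Part (k + 1) (l - 1) (map_rel rotLL_pt r)"
fun rotRU :: "part \<Rightarrow> part" where
  "rotRU (Part k l r) = Part (k - 1) (l + 1) (map_rel (rotRU_pt k l) r)"
fun rotRL :: "part \<Rightarrow> part" where
  "rotRL (Part k l r) = Part (k + 1) (l - 1) (map_rel (rotRL_pt k l) r)"

definition pair_part :: part where
  "pair_part = of_blocks 0 2 {{L 0, L 1}}"

definition id_part :: part where
  "id_part = of_blocks 1 1 {{U 0, L 0}}"

definition four_block :: part where
  "four_block = of_blocks 0 4 {{L 0, L 1, L 2, L 3}}"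

definition double_singleton :: part where
  "double_singleton = of_blocks 0 2 {{L 0}, {L 1}}"

definition pair_positioner :: part where
  "pair_positioner = of_blocks 3 3 {{U 0, U 1, L 1, L 2}, {U 2, L 0}}"

definition category :: "part set \<Rightarrow> bool" where
  "category C \<longleftrightarrow> C \<subseteq> Pall \<and> pair_part \<in> C \<and> id_part \<in> C \<and>
     (\<forall>p\<in>C. \<forall>q\<in>C. tensor p q \<in> C) \<and>
     (\<forall>p\<in>C. \<forall>q\<in>C. lo p = up q \<longrightarrow> compose p q \<in> C) \<and>
     (\<forall>p\<in>C. involution p \<in> C) \<and>
     (\<forall>p\<in>C. up p \<ge> 1 \<longrightarrow> rotLU p \<in> C \<and> rotRU p \<in> C) \<and>
     (\<forall>p\<in>C. lo p \<ge> 1 \<longrightarrow> rotLL p \<in> C \<and> rotRL p \<in> C)"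

definition generated :: "part set \<Rightarrow> part \<Rightarrow> part set" where
  "generated X p = \<Inter> {D. category D \<and> X \<subseteq> D \<and> p \<in> D}"

definition hyperoctahedral :: "part set \<Rightarrow> bool" where
  "hyperoctahedral C \<longleftrightarrow> category C \<and> four_block \<in> C \<and> double_singleton \<notin> C"

definition simplifiable_hyperoctahedral :: "part set \<Rightarrow> bool" where
  "simplifiable_hyperoctahedral C \<longleftrightarrow> hyperoctahedral C \<and> pair_positioner \<in> C"

definition reading :: "nat \<Rightarrow> nat \<Rightarrow> pt list" where
  "reading k l = map U [0..<k] @ map L (rev [0..<l])"

fun single_leg :: "part \<Rightarrow> bool" where
  "single_leg (Part k l r) \<longleftrightarrow>
     (\<forall>i. Suc i < length (reading k l) \<longrightarrow>
        (reading k l ! i, reading k l ! Suc i) \<notin> r)"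

definition sl_part :: "part set \<Rightarrow> part set" where
  "sl_part C = {p \<in> C. single_leg p}"

end

theory Submission
  imports Defs
begin

(* Part (a) says that a category C containing the pair positioner rho is generated by rho together
   with its partitions in single leg form; (b) and (c) follow from (a) because the generated
   category is monotone in its generators.

   Let G be any category containing rho and C_sl.  Rotating upper points down
   reduces to partitions p in P(0,n) \<inter> C, which we show to lie in G by induction on n.  If p is
   not in single leg form, two neighbouring legs i, i+1 lie in one block; capping them off gives
   p' in P(0,n-2) \<inter> C, so p' \<in> G by induction.  Then p is rebuilt from p' inside G: if {i,i+1}
   is a whole block, tensor p' with a pair and slide the pair to position i; otherwise the block
   contains another leg x, which is tripled (with a partition built from rho), and the new pair
   of legs is slid to position i.  Sliding a pair by one step is a composition with rho or rho*.

   All these operations compose a partition of P(0,n) with some id_a \<otimes> X \<otimes> id_b; such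
   compositions are computed once and for all as pullbacks of the block relation along a map of
   legs (splice_in). *)

lemma Pall_equiv: "Part k l r \<in> Pall \<Longrightarrow> equiv (points k l) r"
  by (auto simp: Pall_def Pkl_def)

lemma points_0: "points 0 m = L ` {..<m}"
  by (simp add: points_def)

lemma category_closed:
  assumes "category D"
  shows "D \<subseteq> Pall" "pair_part \<in> D" "id_part \<in> D"
    "p \<in> D \<Longrightarrow> q \<in> D \<Longrightarrow> tensor p q \<in> D"
    "p \<in> D \<Longrightarrow> q \<in> D \<Longrightarrow> lo p = up q \<Longrightarrow> compose p q \<in> D"
    "p \<in> D \<Longrightarrow> involution p \<in> D"
    "p \<in> D \<Longrightarrow> up p \<ge> 1 \<Longrightarrow> rotRU p \<in> D"
    "p \<in> D \<Longrightarrow> lo p \<ge> 1 \<Longrightarrow> rotRL p \<in> D"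
  using assms unfolding category_def by auto

lemma category_equiv: "category D \<Longrightarrow> Part k l r \<in> D \<Longrightarrow> equiv (points k l) r"
  using category_closed(1) Pall_equiv by blast

lemma lower_refl: "equiv (points 0 n) r \<Longrightarrow> c < n \<Longrightarrow> (L c, L c) \<in> r"
  by (auto simp: equiv_def refl_on_def points_0)

lemma equiv_sym: "equiv A r \<Longrightarrow> (x, y) \<in> r \<Longrightarrow> (y, x) \<in> r"
  by (auto simp: equiv_def dest: symD)

lemma equiv_trans: "equiv A r \<Longrightarrow> (x, y) \<in> r \<Longrightarrow> (y, z) \<in> r \<Longrightarrow> (x, z) \<in> r"
  by (auto simp: equiv_def dest: transD)

text \<open>The empty partition is the composition of the pair partition with its reflection.\<close>

lemma empty_part_in:
  assumes D: "category D"
  shows "Part 0 0 {} \<in> D"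
proof -
  have "lo pair_part = up (involution pair_part)"
    by (simp add: pair_part_def of_blocks_def)
  then have "compose pair_part (involution pair_part) \<in> D"
    using category_closed(2,5,6)[OF D] by blast
  moreover have "compose pair_part (involution pair_part) = Part 0 0 {}"
    by (simp add: pair_part_def of_blocks_def points_def)
  ultimately show ?thesis by simp
qed

fun id_n :: "nat \<Rightarrow> part" where
  "id_n 0 = Part 0 0 {}"
| "id_n (Suc a) = tensor (id_n a) id_part"

definition id_rel :: "nat \<Rightarrow> (pt \<times> pt) set" where
  "id_rel a = {(x, y). \<exists>i<a. x \<in> {U i, L i} \<and> y \<in> {U i, L i}}"

lemma id_n_eq: "id_n a = Part a a (id_rel a)"
proof (induction a)
  case 0 then show ?case by (simp add: id_rel_def)
next
  case (Suc a)
  have "id_rel a \<union> map_rel (shift_pt a a) ({U 0, L 0} \<times> {U 0, L 0}) = id_rel (Suc a)"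
    by (auto simp: id_rel_def map_rel_def less_Suc_eq)
  then show ?case using Suc by (simp add: id_part_def of_blocks_def)
qed

lemma id_n_in: "category D \<Longrightarrow> id_n a \<in> D"
  by (induction a) (auto intro: empty_part_in category_closed)

subsection \<open>Pulling back lower-row partitions along maps of legs\<close>

definition pull_rel :: "nat \<Rightarrow> (nat \<Rightarrow> nat) \<Rightarrow> (pt \<times> pt) set \<Rightarrow> (pt \<times> pt) set" where
  "pull_rel m f r = {(L a, L b) | a b. a < m \<and> b < m \<and> (L (f a), L (f b)) \<in> r}"

lemma pull_rel_iff:
  "(L a, L b) \<in> pull_rel m f r \<longleftrightarrow> a < m \<and> b < m \<and> (L (f a), L (f b)) \<in> r"
  by (simp add: pull_rel_def)

lemma pull_rel_cong: "(\<And>c. c < m \<Longrightarrow> f c = g c) \<Longrightarrow> pull_rel m f r = pull_rel m g r"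
  unfolding pull_rel_def by auto

lemma pull_rel_pull_rel:
  "(\<And>c. c < m \<Longrightarrow> f c < n) \<Longrightarrow> pull_rel m f (pull_rel n g r) = pull_rel m (g \<circ> f) r"
  unfolding pull_rel_def by auto

lemma pull_rel_trivial:
  assumes r: "equiv (points 0 n) r" and h: "\<And>c. c < n \<Longrightarrow> h c < n \<and> (L c, L (h c)) \<in> r"
  shows "pull_rel n h r = r"
proof (intro set_eqI iffI)
  fix xy
  assume "xy \<in> pull_rel n h r"
  then obtain a b where "xy = (L a, L b)" "a < n" "b < n" "(L (h a), L (h b)) \<in> r"
    by (auto simp: pull_rel_def)
  then show "xy \<in> r" using h[of a] h[of b] equiv_sym[OF r] equiv_trans[OF r] by meson
next
  fix xy assume xy: "xy \<in> r"
  then obtain a b where ab: "xy = (L a, L b)" "a < n" "b < n"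
    using equiv_type[OF r] by (auto simp: points_0)
  then have "(L (h a), L (h b)) \<in> r"
    using h[of a] h[of b] xy equiv_sym[OF r] equiv_trans[OF r] by meson
  then show "xy \<in> pull_rel n h r" using ab by (auto simp: pull_rel_def)
qed

text \<open>Composing \<open>q \<in> P(0,n)\<close> with a partition \<open>s \<in> P(n,m)\<close> in which each lower point \<open>c\<close> is
  joined to the upper point \<open>f c\<close>, and whose blocks only join points already joined in \<open>q\<close>
  (viewed through \<open>collapse_pt\<close>), is the pullback of \<open>q\<close> along \<open>f\<close>.\<close>

fun collapse_pt :: "(nat \<Rightarrow> nat) \<Rightarrow> pt \<Rightarrow> pt" where
  "collapse_pt f (U u) = L u"
| "collapse_pt f (L c) = L (f c)"

fun collapse_cpt :: "(nat \<Rightarrow> nat) \<Rightarrow> cpt \<Rightarrow> pt" where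
  "collapse_cpt f (CU i) = L 0"
| "collapse_cpt f (CM u) = L u"
| "collapse_cpt f (CL c) = L (f c)"

lemma compose_pull:
  assumes r: "equiv (points 0 n) r" and s_sym: "sym s"
    and f: "\<forall>c<m. f c < n \<and> (U (f c), L c) \<in> s"
    and edges: "\<forall>(x, y)\<in>s. (collapse_pt f x, collapse_pt f y) \<in> r"
  shows "compose (Part 0 n r) (Part n m s) = Part 0 m (pull_rel m f r)"
proof -
  let ?E = "map_rel top_pt r \<union> map_rel bot_pt s"
  have edge: "(collapse_cpt f y, collapse_cpt f z) \<in> r" if "(y, z) \<in> ?E" for y z
  proof -
    have top: "collapse_cpt f (top_pt p) = p" if "p \<in> points 0 n" for p
      using that by (auto simp: points_0)
    have bot: "collapse_cpt f (bot_pt p) = collapse_pt f p" for p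
      by (cases p) auto
    from that consider (t) p p' where "(p, p') \<in> r" "y = top_pt p" "z = top_pt p'"
      | (b) p p' where "(p, p') \<in> s" "y = bot_pt p" "z = bot_pt p'"
      by (auto simp: map_rel_def)
    then show ?thesis
    proof cases
      case t then show ?thesis using equiv_type[OF r] top by auto
    next
      case b then show ?thesis using edges by (auto simp: bot)
    qed
  qed
  \<comment> \<open>every path through the stacked picture stays inside one block of \<open>r\<close>\<close>
  have sound: "x = y \<or> (collapse_cpt f x, collapse_cpt f y) \<in> r" if "(x, y) \<in> ?E\<^sup>*" for x y
    using that
  proof (induction rule: rtrancl_induct)
    case (step y z)
    then show ?case using edge[of y z] equiv_trans[OF r] by auto
  qed simp
  \<comment> \<open>conversely, \<open>a\<close> reaches \<open>b\<close> via the middle points \<open>f a\<close> and \<open>f b\<close>\<close>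
  have path: "(CL a, CL b) \<in> ?E\<^sup>*" if "a < m" "b < m" "(L (f a), L (f b)) \<in> r" for a b
  proof -
    have "(L a, U (f a)) \<in> s" using f that s_sym by (auto dest: symD)
    then have e1: "(CL a, CM (f a)) \<in> ?E" unfolding map_rel_def by force
    have e2: "(CM (f a), CM (f b)) \<in> ?E" using that(3) unfolding map_rel_def by force
    have "(U (f b), L b) \<in> s" using f that by auto
    then have e3: "(CM (f b), CL b) \<in> ?E" unfolding map_rel_def by force
    show ?thesis using e1 e2 e3 by (meson converse_rtrancl_into_rtrancl r_into_rtrancl)
  qed
  have "{(a, b). a \<in> points 0 m \<and> b \<in> points 0 m \<and> (out_pt a, out_pt b) \<in> ?E\<^sup>*}
        = pull_rel m f r"
  proof (intro set_eqI iffI)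
    fix xy assume "xy \<in> {(a, b). a \<in> points 0 m \<and> b \<in> points 0 m \<and> (out_pt a, out_pt b) \<in> ?E\<^sup>*}"
    then obtain a b where xy: "xy = (L a, L b)" "a < m" "b < m" "(CL a, CL b) \<in> ?E\<^sup>*"
      by (auto simp: points_0)
    from sound[OF xy(4)] show "xy \<in> pull_rel m f r"
      using xy f lower_refl[OF r] by (auto simp: pull_rel_def)
  next
    fix xy assume "xy \<in> pull_rel m f r"
    then show "xy \<in> {(a, b). a \<in> points 0 m \<and> b \<in> points 0 m \<and> (out_pt a, out_pt b) \<in> ?E\<^sup>*}"
      using path by (auto simp: pull_rel_def points_0)
  qed
  then show ?thesis by simp
qed

text \<open>Splicing a partition \<open>X \<in> P(k,m)\<close> into \<open>q \<in> P(0,n)\<close> at position \<open>a\<close>, i.e. composing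
  \<open>q\<close> with \<open>id_a \<otimes> X \<otimes> id_b\<close>.\<close>

fun splice_pt :: "nat \<Rightarrow> (nat \<Rightarrow> nat) \<Rightarrow> pt \<Rightarrow> pt" where
  "splice_pt a g (U u) = L (a + u)"
| "splice_pt a g (L t) = L (a + g t)"

definition splice_map :: "nat \<Rightarrow> nat \<Rightarrow> nat \<Rightarrow> (nat \<Rightarrow> nat) \<Rightarrow> nat \<Rightarrow> nat" where
  "splice_map a k m g c = (if c < a then c else if c < a + m then a + g (c - a) else c + k - m)"

lemma splice_in:
  assumes D: "category D" and q: "Part 0 n r \<in> D" and X: "Part k m x \<in> D"
    and n: "n = a + k + b"
    and g: "\<forall>t<m. g t < k \<and> (U (g t), L t) \<in> x"
    and edges: "\<forall>(y, z)\<in>x. (splice_pt a g y, splice_pt a g z) \<in> r"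
  shows "Part 0 (a + m + b) (pull_rel (a + m + b) (splice_map a k m g) r) \<in> D"
proof -
  let ?f = "splice_map a k m g"
  let ?s = "id_rel a \<union> map_rel (shift_pt a a) x \<union> map_rel (shift_pt (a + k) (a + m)) (id_rel b)"
  let ?M = "tensor (tensor (id_n a) (Part k m x)) (id_n b)"
  have M: "?M = Part n (a + m + b) ?s" by (simp add: id_n_eq n)
  have MD: "?M \<in> D" using D X by (auto intro: category_closed id_n_in)
  have req: "equiv (points 0 n) r" using category_equiv[OF D q] .
  have seq: "equiv (points n (a + m + b)) ?s" using category_equiv[OF D] MD M by simp
  have x_sub: "x \<subseteq> points k m \<times> points k m" using equiv_type[OF category_equiv[OF D X]] .
  have "compose (Part 0 n r) ?M = Part 0 (a + m + b) (pull_rel (a + m + b) ?f r)"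
    unfolding M
  proof (rule compose_pull[OF req])
    show "sym ?s" using seq by (simp add: equiv_def)
    show "\<forall>c<a + m + b. ?f c < n \<and> (U (?f c), L c) \<in> ?s"
    proof (intro allI impI)
      fix c assume c: "c < a + m + b"
      consider "c < a" | "a \<le> c" "c < a + m" | "a + m \<le> c" by linarith
      then show "?f c < n \<and> (U (?f c), L c) \<in> ?s"
      proof cases
        case 1 then show ?thesis by (auto simp: splice_map_def n id_rel_def)
      next
        case 2
        then have "g (c - a) < k" "(U (g (c - a)), L (c - a)) \<in> x" using g by auto
        moreover have "(U (a + g (c - a)), L c) \<in> map_rel (shift_pt a a) x"
          unfolding map_rel_def
          by (rule image_eqI[of _ _ "(U (g (c - a)), L (c - a))"]) (use 2 g in auto)
        ultimately show ?thesis using 2 by (auto simp: splice_map_def n)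
      next
        case 3
        have "(U (c - a - m), L (c - a - m)) \<in> id_rel b" using 3 c by (auto simp: id_rel_def)
        then have "(U (c + k - m), L c) \<in> map_rel (shift_pt (a + k) (a + m)) (id_rel b)"
          unfolding map_rel_def
          by (intro image_eqI[of _ _ "(U (c - a - m), L (c - a - m))"]) (use 3 in auto)
        then show ?thesis using 3 c by (auto simp: splice_map_def n)
      qed
    qed
    have shifted: "collapse_pt ?f (shift_pt a a z) = splice_pt a g z" if "z \<in> points k m" for z
      using that by (auto simp: points_def splice_map_def)
    show "\<forall>(y, z)\<in>?s. (collapse_pt ?f y, collapse_pt ?f z) \<in> r"
      using lower_refl[OF req] shifted edges x_sub n
      by (fastforce simp: id_rel_def map_rel_def splice_map_def)
  qed
  moreover have "compose (Part 0 n r) ?M \<in> D"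
    using category_closed(5)[OF D q MD] M by simp
  ultimately show ?thesis by simp
qed

subsection \<open>Elementary moves on lower-row partitions\<close>

text \<open>Capping: two neighbouring legs \<open>a, a+1\<close> in the same block can be erased by splicing in
  the reflected pair partition; the remaining legs are pulled back along \<open>skip_pair a\<close>.\<close>

definition skip_pair :: "nat \<Rightarrow> nat \<Rightarrow> nat" where
  "skip_pair a c = (if c < a then c else c + 2)"

lemma cap_pair_in:
  assumes D: "category D" and q: "Part 0 n r \<in> D" and a: "a + 1 < n" and e: "(L a, L (a+1)) \<in> r"
  shows "Part 0 (n - 2) (pull_rel (n - 2) (skip_pair a) r) \<in> D"
proof -
  have req: "equiv (points 0 n) r" using category_equiv[OF D q] .
  have X: "Part 2 0 (map_rel flip_pt ({L 0, L 1} \<times> {L 0, L 1})) \<in> D"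
    using category_closed(6)[OF D category_closed(2)[OF D]] by (simp add: pair_part_def of_blocks_def)
  have "Part 0 (a + 0 + (n - 2 - a)) (pull_rel (a + 0 + (n - 2 - a)) (splice_map a 2 0 (\<lambda>_. 0)) r) \<in> D"
    by (rule splice_in[OF D q X])
      (use a e lower_refl[OF req, of a] lower_refl[OF req, of "a+1"] equiv_sym[OF req e]
        in \<open>auto simp: map_rel_def\<close>)
  moreover have "a + 0 + (n - 2 - a) = n - 2" using a by simp
  moreover have "pull_rel (n - 2) (splice_map a 2 0 (\<lambda>_. 0)) r
      = pull_rel (n - 2) (skip_pair a) r"
    by (rule pull_rel_cong) (auto simp: splice_map_def skip_pair_def)
  ultimately show ?thesis by simp
qed

text \<open>Moving a pair one step to the right: if legs \<open>a, a+1\<close> are joined, splicing in \<open>\<rho>\<close>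
  puts a copy of their block at \<open>a+1, a+2\<close> and moves leg \<open>a+2\<close> to position \<open>a\<close>.\<close>

lemma move_pair_right_in:
  assumes D: "category D" and rho: "pair_positioner \<in> D" and q: "Part 0 n r \<in> D"
    and a: "a + 2 < n" and e: "(L a, L (a+1)) \<in> r"
  shows "Part 0 n (pull_rel n (\<lambda>c. if c = a then a + 2 else if c = a + 1 \<or> c = a + 2 then a else c) r) \<in> D"
proof -
  have req: "equiv (points 0 n) r" using category_equiv[OF D q] .
  have X: "Part 3 3 ({U 0, U 1, L 1, L 2} \<times> {U 0, U 1, L 1, L 2} \<union> {U 2, L 0} \<times> {U 2, L 0}) \<in> D"
    using rho by (simp add: pair_positioner_def of_blocks_def)
  have "Part 0 (a + 3 + (n - 3 - a))
      (pull_rel (a + 3 + (n - 3 - a)) (splice_map a 3 3 (\<lambda>t. if t = 0 then 2 else 0)) r) \<in> D"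
    by (rule splice_in[OF D q X])
      (use a e lower_refl[OF req, of a] lower_refl[OF req, of "a+1"] lower_refl[OF req, of "a+2"]
        equiv_sym[OF req e] in auto)
  moreover have "a + 3 + (n - 3 - a) = n" using a by simp
  moreover have "pull_rel n (splice_map a 3 3 (\<lambda>t. if t = 0 then 2 else 0)) r
      = pull_rel n (\<lambda>c. if c = a then a + 2 else if c = a + 1 \<or> c = a + 2 then a else c) r"
    by (rule pull_rel_cong) (auto simp: splice_map_def)
  ultimately show ?thesis by simp
qed

text \<open>Moving a pair one step to the left, by splicing in the reflection of \<open>\<rho>\<close>.\<close>

lemma move_pair_left_in:
  assumes D: "category D" and rho: "pair_positioner \<in> D" and q: "Part 0 n r \<in> D"
    and a: "a + 2 < n" and e: "(L (a+1), L (a+2)) \<in> r"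
  shows "Part 0 n (pull_rel n (\<lambda>c. if c = a \<or> c = a + 1 then a + 1 else if c = a + 2 then a else c) r) \<in> D"
proof -
  have req: "equiv (points 0 n) r" using category_equiv[OF D q] .
  have X: "Part 3 3 (map_rel flip_pt
      ({U 0, U 1, L 1, L 2} \<times> {U 0, U 1, L 1, L 2} \<union> {U 2, L 0} \<times> {U 2, L 0})) \<in> D"
    using category_closed(6)[OF D rho] by (simp add: pair_positioner_def of_blocks_def)
  have "Part 0 (a + 3 + (n - 3 - a))
      (pull_rel (a + 3 + (n - 3 - a)) (splice_map a 3 3 (\<lambda>t. if t = 2 then 0 else 1)) r) \<in> D"
    by (rule splice_in[OF D q X])
      (use a e lower_refl[OF req, of a] lower_refl[OF req, of "a+1"] lower_refl[OF req, of "a+2"]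
        equiv_sym[OF req e] in \<open>auto simp: map_rel_def\<close>)
  moreover have "a + 3 + (n - 3 - a) = n" using a by simp
  moreover have "pull_rel n (splice_map a 3 3 (\<lambda>t. if t = 2 then 0 else 1)) r
      = pull_rel n (\<lambda>c. if c = a \<or> c = a + 1 then a + 1 else if c = a + 2 then a else c) r"
    by (rule pull_rel_cong) (auto simp: splice_map_def)
  ultimately show ?thesis by simp
qed

text \<open>The partition in \<open>P(1,3)\<close> with a single block, obtained as \<open>(| \<otimes> \<sqcap>) \<rho>\<close>; it is used
  to triple a leg.\<close>

definition triple_part :: part where
  "triple_part = Part 1 3 ({U 0, L 0, L 1, L 2} \<times> {U 0, L 0, L 1, L 2})"

lemma triple_part_in:
  assumes D: "category D" and rho: "pair_positioner \<in> D"
  shows "triple_part \<in> D"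
proof -
  have t: "tensor id_part pair_part \<in> D" using category_closed[OF D] by auto
  have c: "compose (tensor id_part pair_part) pair_positioner \<in> D"
    using category_closed(5)[OF D t rho]
    by (simp add: id_part_def pair_part_def pair_positioner_def of_blocks_def)
  let ?A = "{U 0, L 0} \<times> {U 0, L 0} \<union> map_rel (shift_pt 1 1) ({L 0, L 1} \<times> {L 0, L 1})"
  let ?R = "{U 0, U 1, L 1, L 2} \<times> {U 0, U 1, L 1, L 2} \<union> {U 2, L 0} \<times> {U 2, L 0}"
  let ?E = "map_rel top_pt ?A \<union> map_rel bot_pt ?R"
  have e1: "(CU 0, CM 0) \<in> ?E" "(CM 0, CU 0) \<in> ?E" unfolding map_rel_def by force+
  have e2: "(CM 0, CL 1) \<in> ?E" "(CL 1, CM 0) \<in> ?E" "(CM 0, CL 2) \<in> ?E" "(CL 2, CM 0) \<in> ?E"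
    "(CM 0, CM 1) \<in> ?E" "(CM 1, CM 0) \<in> ?E" "(CM 2, CL 0) \<in> ?E" "(CL 0, CM 2) \<in> ?E"
    unfolding map_rel_def by force+
  have e3: "(CM 1, CM 2) \<in> ?E" "(CM 2, CM 1) \<in> ?E" unfolding map_rel_def
    by (rule UnI1, rule image_eqI[of _ _ "(L 1, L 2)"], simp, force)
      (rule UnI1, rule image_eqI[of _ _ "(L 2, L 1)"], simp, force)
  have conn: "(CU 0, y) \<in> ?E\<^sup>* \<and> (y, CU 0) \<in> ?E\<^sup>*" if "y \<in> {CU 0, CL 0, CL 1, CL 2}" for y
  proof -
    have "(CU 0, CL 1) \<in> ?E\<^sup>*" "(CL 1, CU 0) \<in> ?E\<^sup>*" "(CU 0, CL 2) \<in> ?E\<^sup>*" "(CL 2, CU 0) \<in> ?E\<^sup>*"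
      using e1 e2 by (meson converse_rtrancl_into_rtrancl r_into_rtrancl)+
    moreover have "(CU 0, CL 0) \<in> ?E\<^sup>*" "(CL 0, CU 0) \<in> ?E\<^sup>*"
      using e1 e2 e3 by (meson converse_rtrancl_into_rtrancl r_into_rtrancl)+
    ultimately show ?thesis using that by auto
  qed
  have p: "points 1 3 = {U 0, L 0, L 1, L 2}" by (auto simp: points_def)
  have "(out_pt a, out_pt b) \<in> ?E\<^sup>*" if "a \<in> {U 0, L 0, L 1, L 2}" "b \<in> {U 0, L 0, L 1, L 2}" for a b
  proof -
    have "out_pt a \<in> {CU 0, CL 0, CL 1, CL 2}" "out_pt b \<in> {CU 0, CL 0, CL 1, CL 2}"
      using that by auto
    then show ?thesis using conn by (meson rtrancl_trans)
  qed
  then have "{(a, b). a \<in> points 1 3 \<and> b \<in> points 1 3 \<and> (out_pt a, out_pt b) \<in> ?E\<^sup>*}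
      = {U 0, L 0, L 1, L 2} \<times> {U 0, L 0, L 1, L 2}"
    unfolding p by auto
  then have "compose (tensor id_part pair_part) pair_positioner = triple_part"
    by (simp add: id_part_def pair_part_def pair_positioner_def of_blocks_def triple_part_def)
  then show ?thesis using c by simp
qed

lemma triple_leg_in:
  assumes D: "category D" and rho: "pair_positioner \<in> D" and q: "Part 0 n r \<in> D" and a: "a < n"
  shows "Part 0 (n + 2) (pull_rel (n + 2) (\<lambda>c. if c < a then c else if c < a + 3 then a else c - 2) r) \<in> D"
proof -
  have req: "equiv (points 0 n) r" using category_equiv[OF D q] .
  have X: "Part 1 3 ({U 0, L 0, L 1, L 2} \<times> {U 0, L 0, L 1, L 2}) \<in> D"
    using triple_part_in[OF D rho] by (simp add: triple_part_def)
  have "Part 0 (a + 3 + (n - 1 - a)) (pull_rel (a + 3 + (n - 1 - a)) (splice_map a 1 3 (\<lambda>_. 0)) r) \<in> D"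
    by (rule splice_in[OF D q X]) (use a lower_refl[OF req, of a] in auto)
  moreover have "a + 3 + (n - 1 - a) = n + 2" using a by simp
  moreover have "pull_rel (n + 2) (splice_map a 1 3 (\<lambda>_. 0)) r
      = pull_rel (n + 2) (\<lambda>c. if c < a then c else if c < a + 3 then a else c - 2) r"
    by (rule pull_rel_cong) (use a in \<open>auto simp: splice_map_def\<close>)
  ultimately show ?thesis by simp
qed

text \<open>Sliding the pair at \<open>j, j+1\<close> to the left by \<open>d\<close> steps, resp. to the right by \<open>d\<close> steps:
  the resulting legs are pulled back along these maps.\<close>

definition slide_left_map :: "nat \<Rightarrow> nat \<Rightarrow> nat \<Rightarrow> nat" where
  "slide_left_map j d c =
     (if c < j - d then c else if c \<le> j - d + 1 then j else if c \<le> j + 1 then c - 2 else c)"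

definition slide_right_map :: "nat \<Rightarrow> nat \<Rightarrow> nat \<Rightarrow> nat" where
  "slide_right_map j d c =
     (if c < j then c else if c < j + d then c + 2 else if c \<le> j + d + 1 then j else c)"

lemma pull_rel_merge_pair:
  assumes req: "equiv (points 0 n) r" and j: "j + 1 < n" and e: "(L j, L (j+1)) \<in> r"
    and h: "\<And>c. h c = (if c < j then c else if c \<le> j + 1 then j else c)"
  shows "pull_rel n h r = r"
  by (rule pull_rel_trivial[OF req])
    (use j lower_refl[OF req] equiv_sym[OF req e] in \<open>auto simp: h le_Suc_eq\<close>)

lemma slide_pair_left_in:
  assumes D: "category D" and rho: "pair_positioner \<in> D" and q: "Part 0 n r \<in> D"
    and j: "j + 1 < n" and e: "(L j, L (j+1)) \<in> r"
  shows "d \<le> j \<Longrightarrow> Part 0 n (pull_rel n (slide_left_map j d) r) \<in> D"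
proof (induction d)
  case 0
  have "pull_rel n (slide_left_map j 0) r = r"
    by (rule pull_rel_merge_pair[OF category_equiv[OF D q] j e]) (auto simp: slide_left_map_def)
  then show ?case using q by simp
next
  case (Suc d)
  have req: "equiv (points 0 n) r" using category_equiv[OF D q] .
  have IH: "Part 0 n (pull_rel n (slide_left_map j d) r) \<in> D" using Suc by simp
  have e': "(L (j - Suc d + 1), L (j - Suc d + 2)) \<in> pull_rel n (slide_left_map j d) r"
    using Suc.prems j lower_refl[OF req, of j] by (auto simp: pull_rel_def slide_left_map_def)
  have "Part 0 n (pull_rel n (\<lambda>c. if c = j - Suc d \<or> c = j - Suc d + 1 then j - Suc d + 1
      else if c = j - Suc d + 2 then j - Suc d else c) (pull_rel n (slide_left_map j d) r)) \<in> D"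
    by (rule move_pair_left_in[OF D rho IH _ e']) (use Suc.prems j in auto)
  also have "pull_rel n (\<lambda>c. if c = j - Suc d \<or> c = j - Suc d + 1 then j - Suc d + 1
      else if c = j - Suc d + 2 then j - Suc d else c) (pull_rel n (slide_left_map j d) r)
      = pull_rel n (slide_left_map j (Suc d)) r"
    by (subst pull_rel_pull_rel, use Suc.prems j in force)
      (rule pull_rel_cong, use Suc.prems j in \<open>auto simp: slide_left_map_def\<close>)
  finally show ?case .
qed

lemma slide_pair_right_in:
  assumes D: "category D" and rho: "pair_positioner \<in> D" and q: "Part 0 n r \<in> D"
    and e: "(L j, L (j+1)) \<in> r"
  shows "j + d + 1 < n \<Longrightarrow> Part 0 n (pull_rel n (slide_right_map j d) r) \<in> D"
proof (induction d)
  case 0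
  have "pull_rel n (slide_right_map j 0) r = r"
    by (rule pull_rel_merge_pair[OF category_equiv[OF D q] _ e]) (use 0 in \<open>auto simp: slide_right_map_def\<close>)
  then show ?case using q by simp
next
  case (Suc d)
  have req: "equiv (points 0 n) r" using category_equiv[OF D q] .
  have IH: "Part 0 n (pull_rel n (slide_right_map j d) r) \<in> D" using Suc by simp
  have e': "(L (j + d), L (j + d + 1)) \<in> pull_rel n (slide_right_map j d) r"
    using Suc.prems lower_refl[OF req, of j] by (auto simp: pull_rel_def slide_right_map_def)
  have "Part 0 n (pull_rel n (\<lambda>c. if c = j + d then j + d + 2
      else if c = j + d + 1 \<or> c = j + d + 2 then j + d else c) (pull_rel n (slide_right_map j d) r)) \<in> D"
    by (rule move_pair_right_in[OF D rho IH _ e']) (use Suc.prems in auto)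
  also have "pull_rel n (\<lambda>c. if c = j + d then j + d + 2
      else if c = j + d + 1 \<or> c = j + d + 2 then j + d else c) (pull_rel n (slide_right_map j d) r)
      = pull_rel n (slide_right_map j (Suc d)) r"
    by (subst pull_rel_pull_rel, use Suc.prems in force)
      (rule pull_rel_cong, use Suc.prems in \<open>auto simp: slide_right_map_def\<close>)
  finally show ?case .
qed

subsection \<open>Rebuilding a partition from its capped version\<close>

text \<open>If \<open>{i, i+1}\<close> is a whole block, appending a pair to the capped partition and sliding it
  from the end to position \<open>i\<close> gives back \<open>r\<close>.  Here \<open>s\<close> is the capped partition with the pair
  appended.\<close>

lemma slide_appended_pair:
  assumes req: "equiv (points 0 n) r" and i: "i + 1 < n" and e: "(L i, L (i+1)) \<in> r"
    and isolated: "\<forall>b<n. (L i, L b) \<in> r \<longrightarrow> b = i \<or> b = i + 1"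
    and s_iff: "\<And>p p'. (L p, L p') \<in> s \<longleftrightarrow>
       (p < n - 2 \<and> p' < n - 2 \<and> (L (skip_pair i p), L (skip_pair i p')) \<in> r)
       \<or> (p \<in> {n - 2, n - 1} \<and> p' \<in> {n - 2, n - 1})"
  shows "pull_rel n (slide_left_map (n - 2) (n - 2 - i)) s = r"
proof -
  let ?h = "slide_left_map (n - 2) (n - 2 - i)"
  have h: "?h c = (if c < i then c else if c \<le> i + 1 then n - 2 else c - 2)" if "c < n" for c
    using that i by (auto simp: slide_left_map_def)
  have h_outside: "?h c < n - 2 \<and> skip_pair i (?h c) = c" if "c \<notin> {i, i + 1}" "c < n" for c
    using h[of c] that i by (auto simp: skip_pair_def)
  have in_pair: "b \<in> {i, i + 1}" if "(L c, L b) \<in> r" "c \<in> {i, i + 1}" "b < n" for c b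
  proof -
    have "(L i, L b) \<in> r" using that e equiv_trans[OF req] by auto
    then show ?thesis using isolated that by auto
  qed
  have key: "(L (?h a), L (?h b)) \<in> s \<longleftrightarrow> (L a, L b) \<in> r" if ab: "a < n" "b < n" for a b
  proof -
    consider "a \<in> {i, i+1}" "b \<in> {i, i+1}" | "a \<in> {i, i+1}" "b \<notin> {i, i+1}"
      | "a \<notin> {i, i+1}" "b \<in> {i, i+1}" | "a \<notin> {i, i+1}" "b \<notin> {i, i+1}" by blast
    then show ?thesis
    proof cases
      case 1
      then have "(L a, L b) \<in> r"
        using e equiv_sym[OF req e] lower_refl[OF req, of i] lower_refl[OF req, of "i+1"] i by auto
      then show ?thesis using 1 h ab i by (auto simp: s_iff)
    next
      case 2
      then have "(L a, L b) \<notin> r" using in_pair[of a b] ab by auto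
      then show ?thesis using 2 h h_outside[of b] ab i by (auto simp: s_iff)
    next
      case 3
      then have "(L a, L b) \<notin> r" using in_pair[of b a] ab equiv_sym[OF req] by blast
      then show ?thesis using 3 h h_outside[of a] ab i by (auto simp: s_iff)
    next
      case 4
      then show ?thesis using h_outside[of a] h_outside[of b] ab by (auto simp: s_iff)
    qed
  qed
  show ?thesis
  proof (intro set_eqI iffI)
    fix xy assume "xy \<in> pull_rel n ?h s"
    then show "xy \<in> r" using key by (auto simp: pull_rel_def)
  next
    fix xy assume xy: "xy \<in> r"
    then obtain a b where "xy = (L a, L b)" "a < n" "b < n"
      using equiv_type[OF req] by (auto simp: points_0)
    then show "xy \<in> pull_rel n ?h s" using key xy by (auto simp: pull_rel_def)
  qed
qed

lemma rebuild_isolated_pair: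
  assumes G: "category G" and rho: "pair_positioner \<in> G"
    and req: "equiv (points 0 n) r" and i: "i + 1 < n" and e: "(L i, L (i+1)) \<in> r"
    and isolated: "\<forall>b<n. (L i, L b) \<in> r \<longrightarrow> b = i \<or> b = i + 1"
    and capped: "Part 0 (n - 2) (pull_rel (n - 2) (skip_pair i) r) \<in> G"
  shows "Part 0 n r \<in> G"
proof -
  define s where "s = pull_rel (n - 2) (skip_pair i) r
    \<union> map_rel (shift_pt 0 (n - 2)) ({L 0, L 1} \<times> {L 0, L 1})"
  have "Suc (Suc (n - 2)) = n" using i by arith
  then have sG: "Part 0 n s \<in> G"
    using category_closed(4)[OF G capped category_closed(2)[OF G]]
    by (simp add: pair_part_def of_blocks_def s_def)
  have s_iff: "(L p, L p') \<in> s \<longleftrightarrow>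
      (p < n - 2 \<and> p' < n - 2 \<and> (L (skip_pair i p), L (skip_pair i p')) \<in> r)
      \<or> (p \<in> {n - 2, n - 1} \<and> p' \<in> {n - 2, n - 1})" for p p'
    using i by (auto simp: s_def pull_rel_iff map_rel_def)
  have "(L (n - 2), L (n - 2 + 1)) \<in> s" using i by (simp add: s_iff)
  from slide_pair_left_in[OF G rho sG _ this] i
  have "Part 0 n (pull_rel n (slide_left_map (n - 2) (n - 2 - i)) s) \<in> G" by simp
  then show ?thesis
    using slide_appended_pair[OF req i e isolated s_iff] by simp
qed

text \<open>If the block of the pair also contains a leg \<open>x\<close> to its left, triple \<open>x\<close> in the capped
  partition and slide the new pair \<open>x+1, x+2\<close> to the right until it sits at \<open>i, i+1\<close>.\<close>

lemma rebuild_pair_left_leg: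
  assumes G: "category G" and rho: "pair_positioner \<in> G"
    and req: "equiv (points 0 n) r" and i: "i + 1 < n" and e: "(L i, L (i+1)) \<in> r"
    and x: "x < i" "(L i, L x) \<in> r"
    and capped: "Part 0 (n - 2) (pull_rel (n - 2) (skip_pair i) r) \<in> G"
  shows "Part 0 n r \<in> G"
proof -
  define triple where "triple = (\<lambda>c. if c < x then c else if c < x + 3 then x else c - 2)"
  define slide where "slide = slide_right_map (x + 1) (i - x - 1)"
  have n: "n - 2 + 2 = n" using i by simp
  have tripled: "Part 0 n (pull_rel n triple (pull_rel (n - 2) (skip_pair i) r)) \<in> G"
    using triple_leg_in[OF G rho capped, of x] x i n by (simp add: triple_def)
  have "(L (x + 1), L (x + 1 + 1)) \<in> pull_rel n triple (pull_rel (n - 2) (skip_pair i) r)"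
    using lower_refl[OF req, of x] x i by (auto simp: pull_rel_def triple_def skip_pair_def)
  from slide_pair_right_in[OF G rho tripled this, of "i - x - 1"] x i
  have "Part 0 n (pull_rel n slide (pull_rel n triple (pull_rel (n - 2) (skip_pair i) r))) \<in> G"
    by (simp add: slide_def)
  also have "pull_rel n slide (pull_rel n triple (pull_rel (n - 2) (skip_pair i) r))
      = pull_rel n (skip_pair i \<circ> (triple \<circ> slide)) r"
    by (subst pull_rel_pull_rel, use x i in \<open>force simp: slide_def slide_right_map_def\<close>)
      (subst pull_rel_pull_rel, use x i in \<open>auto simp: slide_def slide_right_map_def triple_def\<close>)
  also have "\<dots> = r"
  proof (rule pull_rel_trivial[OF req])
    have minus_2: "Suc (Suc (c - 2)) = c" if "2 \<le> c" for c :: nat using that by arith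
    fix c assume c: "c < n"
    have x_block: "(L c, L x) \<in> r" if "c = i \<or> c = i + 1"
      using that x(2) equiv_sym[OF req e] equiv_trans[OF req] by auto
    consider "c < x" | "c = x" | "x < c" "c < i" | "c = i \<or> c = i + 1" | "i + 1 < c" by linarith
    then show "(skip_pair i \<circ> (triple \<circ> slide)) c < n \<and> (L c, L ((skip_pair i \<circ> (triple \<circ> slide)) c)) \<in> r"
    proof cases
      case 4
      then have "(skip_pair i \<circ> (triple \<circ> slide)) c = x"
        using x by (auto simp: skip_pair_def triple_def slide_def slide_right_map_def)
      then show ?thesis using x_block[OF 4] x i by simp
    qed (use x c lower_refl[OF req, of c] in \<open>auto simp: skip_pair_def triple_def slide_def
        slide_right_map_def minus_2\<close>)
  qed
  finally show ?thesis .
qed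

text \<open>Symmetrically, if the block contains a leg \<open>x\<close> to the right of the pair, triple it and
  slide the new pair to the left.\<close>

lemma rebuild_pair_right_leg:
  assumes G: "category G" and rho: "pair_positioner \<in> G"
    and req: "equiv (points 0 n) r" and e: "(L i, L (i+1)) \<in> r"
    and x: "i + 1 < x" "x < n" "(L i, L x) \<in> r"
    and capped: "Part 0 (n - 2) (pull_rel (n - 2) (skip_pair i) r) \<in> G"
  shows "Part 0 n r \<in> G"
proof -
  define x' where "x' = x - 2"
  define triple where "triple = (\<lambda>c. if c < x' then c else if c < x' + 3 then x' else c - 2)"
  define slide where "slide = slide_left_map x' (x' - i)"
  have n: "n - 2 + 2 = n" and x_eq: "Suc (Suc x') = x" using x by (simp_all add: x'_def)
  have tripled: "Part 0 n (pull_rel n triple (pull_rel (n - 2) (skip_pair i) r)) \<in> G"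
    using triple_leg_in[OF G rho capped, of x'] x n by (simp add: triple_def x'_def)
  have "(L x', L (x' + 1)) \<in> pull_rel n triple (pull_rel (n - 2) (skip_pair i) r)"
    using lower_refl[OF req, of x] x x_eq by (auto simp: pull_rel_def triple_def skip_pair_def)
  from slide_pair_left_in[OF G rho tripled _ this, of "x' - i"] x
  have "Part 0 n (pull_rel n slide (pull_rel n triple (pull_rel (n - 2) (skip_pair i) r))) \<in> G"
    by (simp add: slide_def x'_def)
  also have "pull_rel n slide (pull_rel n triple (pull_rel (n - 2) (skip_pair i) r))
      = pull_rel n (skip_pair i \<circ> (triple \<circ> slide)) r"
    by (subst pull_rel_pull_rel, use x in \<open>force simp: slide_def slide_left_map_def x'_def\<close>)
      (subst pull_rel_pull_rel, use x in \<open>auto simp: slide_def slide_left_map_def triple_def x'_def\<close>)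
  also have "\<dots> = r"
  proof (rule pull_rel_trivial[OF req])
    have minus_2: "Suc (Suc (c - 2)) = c" if "2 \<le> c" for c :: nat using that by arith
    fix c assume c: "c < n"
    have x_block: "(L c, L x) \<in> r" if "c = i \<or> c = i + 1"
      using that x(3) equiv_sym[OF req e] equiv_trans[OF req] by auto
    consider "c < i" | "c = i \<or> c = i + 1" | "i + 1 < c" "c < x" | "c = x" | "x < c" by linarith
    then show "(skip_pair i \<circ> (triple \<circ> slide)) c < n \<and> (L c, L ((skip_pair i \<circ> (triple \<circ> slide)) c)) \<in> r"
    proof cases
      case 2
      then have "(skip_pair i \<circ> (triple \<circ> slide)) c = x"
        using x x_eq by (auto simp: skip_pair_def triple_def slide_def slide_left_map_def)
      then show ?thesis using x_block[OF 2] x by simp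
    qed (use x c lower_refl[OF req, of c] in \<open>auto simp: skip_pair_def triple_def slide_def
        slide_left_map_def x'_def minus_2\<close>)
  qed
  finally show ?thesis .
qed

text \<open>For lower-row partitions the reading word is the lower row from right to left, so failing
  single leg form means two neighbouring legs lie in one block.\<close>

lemma not_single_leg_adjacent:
  assumes "\<not> single_leg (Part 0 n r)"
  obtains i where "i + 1 < n" "(L (i+1), L i) \<in> r"
proof -
  from assms obtain t where t: "Suc t < n" "(L (rev [0..<n] ! t), L (rev [0..<n] ! Suc t)) \<in> r"
    by (auto simp: reading_def)
  then have "(L (n - Suc t), L (n - Suc (Suc t))) \<in> r" by (simp add: rev_nth)
  moreover have "n - Suc t = (n - Suc (Suc t)) + 1" using t by simp
  ultimately show ?thesis using that[of "n - Suc (Suc t)"] t by auto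
qed

text \<open>Every lower-row partition of \<open>C\<close> lies in any category containing \<open>\<rho>\<close> and \<open>C\<^sub>s\<^sub>l\<close>, by
  induction on the number of legs: cap a pair of neighbouring legs and rebuild.\<close>

lemma lower_row_in:
  assumes C: "category C" and G: "category G" and rho: "pair_positioner \<in> G"
    and sl: "sl_part C \<subseteq> G"
  shows "Part 0 n r \<in> C \<Longrightarrow> Part 0 n r \<in> G"
proof (induction n arbitrary: r rule: less_induct)
  case (less n r)
  show ?case
  proof (cases "single_leg (Part 0 n r)")
    case True then show ?thesis using less.prems sl by (auto simp: sl_part_def)
  next
    case False
    have req: "equiv (points 0 n) r" using category_equiv[OF C less.prems] .
    obtain i where i: "i + 1 < n" and "(L (i+1), L i) \<in> r"
      using False by (rule not_single_leg_adjacent)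
    then have e: "(L i, L (i+1)) \<in> r" using equiv_sym[OF req] by blast
    have "Part 0 (n - 2) (pull_rel (n - 2) (skip_pair i) r) \<in> C"
      using cap_pair_in[OF C less.prems i e] .
    then have capped: "Part 0 (n - 2) (pull_rel (n - 2) (skip_pair i) r) \<in> G"
      using less.IH i by simp
    consider "\<forall>b<n. (L i, L b) \<in> r \<longrightarrow> b = i \<or> b = i + 1"
      | x where "x < i" "(L i, L x) \<in> r"
      | x where "i + 1 < x" "x < n" "(L i, L x) \<in> r"
    proof (cases "\<forall>b<n. (L i, L b) \<in> r \<longrightarrow> b = i \<or> b = i + 1")
      case False
      then obtain x where "x < n" "(L i, L x) \<in> r" "x \<noteq> i" "x \<noteq> i + 1" by auto
      then show ?thesis using that(2,3) by (metis Suc_eq_plus1 Suc_lessI linorder_neqE_nat)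
    qed
    then show ?thesis
    proof cases
      case 1 then show ?thesis by (rule rebuild_isolated_pair[OF G rho req i e _ capped])
    next
      case 2 then show ?thesis by (rule rebuild_pair_left_leg[OF G rho req i e _ _ capped])
    next
      case 3 then show ?thesis by (rule rebuild_pair_right_leg[OF G rho req e _ _ _ capped])
    qed
  qed
qed

subsection \<open>Reduction to lower-row partitions by rotation\<close>

lemma rotate_back:
  assumes p: "Part k l r \<in> Pall" and k: "k \<ge> 1"
  shows "rotRL (rotRU (Part k l r)) = Part k l r"
proof -
  have sub: "r \<subseteq> points k l \<times> points k l" using equiv_type[OF Pall_equiv[OF p]] .
  have inv: "rotRL_pt (k - 1) (l + 1) (rotRU_pt k l x) = x" if "x \<in> points k l" for x
    using that k by (auto simp: points_def)
  have "map_rel (rotRL_pt (k - 1) (l + 1)) (map_rel (rotRU_pt k l) r)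
      = (\<lambda>(a, b). (rotRL_pt (k - 1) (l + 1) (rotRU_pt k l a), rotRL_pt (k - 1) (l + 1) (rotRU_pt k l b))) ` r"
    unfolding map_rel_def image_image by (simp add: case_prod_beta)
  also have "\<dots> = r"
    using sub inv by (auto intro!: image_cong[where g = "\<lambda>x. x", simplified])
  finally show ?thesis using k by simp
qed

text \<open>Rotating all upper points down reduces the general case to lower-row partitions.\<close>

lemma category_sl_generated:
  assumes C: "category C" and G: "category G" and rho: "pair_positioner \<in> G"
    and sl: "sl_part C \<subseteq> G"
  shows "C \<subseteq> G"
proof
  fix p assume "p \<in> C"
  moreover obtain k l r where "p = Part k l r" by (cases p)
  moreover have "Part k l r \<in> C \<Longrightarrow> Part k l r \<in> G" for k l r
  proof (induction k arbitrary: l r)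
    case 0 then show ?case using lower_row_in[OF C G rho sl] by simp
  next
    case (Suc k)
    have rot: "rotRU (Part (Suc k) l r) \<in> G"
      using category_closed(7)[OF C Suc.prems] Suc.IH by simp
    have "lo (rotRU (Part (Suc k) l r)) \<ge> 1" by simp
    then have rotated: "rotRL (rotRU (Part (Suc k) l r)) \<in> G"
      using category_closed(8)[OF G rot] by blast
    have "rotRL (rotRU (Part (Suc k) l r)) = Part (Suc k) l r"
      by (rule rotate_back) (use Suc.prems category_closed(1)[OF C] in auto)
    then show ?case using rotated by simp
  qed
  ultimately show "p \<in> G" by simp
qed

lemma category_Inter:
  assumes "S \<noteq> {}" and "\<And>D. D \<in> S \<Longrightarrow> category D"
  shows "category (\<Inter>S)"
  unfolding category_def
proof (intro conjI ballI impI)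
  show "\<Inter>S \<subseteq> Pall" using assms category_closed(1) by blast
  show "pair_part \<in> \<Inter>S" "id_part \<in> \<Inter>S" using assms category_closed(2,3) by blast+
  fix a assume a: "a \<in> \<Inter>S"
  show "involution a \<in> \<Inter>S" using a assms category_closed(6) by blast
  show "rotLU a \<in> \<Inter>S" "rotRU a \<in> \<Inter>S" if "1 \<le> up a"
    using a that assms unfolding category_def by blast+
  show "rotLL a \<in> \<Inter>S" "rotRL a \<in> \<Inter>S" if "1 \<le> lo a"
    using a that assms unfolding category_def by blast+
  fix b assume b: "b \<in> \<Inter>S"
  show "tensor a b \<in> \<Inter>S" using a b assms category_closed(4) by blast
  show "compose a b \<in> \<Inter>S" if "lo a = up b" using a b that assms category_closed(5) by blast
qed

lemma generated_category:
  assumes "category C" "X \<subseteq> C" "p \<in> C"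
  shows "category (generated X p)"
  unfolding generated_def using assms by (intro category_Inter) auto

lemma generated_mono: "X \<subseteq> Y \<Longrightarrow> generated X p \<subseteq> generated Y p"
  unfolding generated_def by blast

lemma generated_sl_part:
  assumes C: "category C" and rho: "pair_positioner \<in> C"
  shows "generated (sl_part C) pair_positioner = C"
proof
  have sub: "sl_part C \<subseteq> C" by (auto simp: sl_part_def)
  show "generated (sl_part C) pair_positioner \<subseteq> C"
    unfolding generated_def using C sub rho by blast
  show "C \<subseteq> generated (sl_part C) pair_positioner"
    by (rule category_sl_generated[OF C generated_category[OF C sub rho]])
      (auto simp: generated_def)
qed

lemma sl_part_subset_iff:
  assumes "category C" "pair_positioner \<in> C" "category D" "pair_positioner \<in> D"
  shows "sl_part C \<subseteq> sl_part D \<longleftrightarrow> C \<subseteq> D"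
  using generated_mono[of "sl_part C" "sl_part D" pair_positioner]
    generated_sl_part[OF assms(1,2)] generated_sl_part[OF assms(3,4)]
  by (auto simp: sl_part_def)

theorem mainTheorem5:
  assumes "simplifiable_hyperoctahedral C" and "simplifiable_hyperoctahedral D"
  shows "generated (sl_part C) pair_positioner = C \<and>
         (sl_part C = sl_part D \<longleftrightarrow> C = D) \<and>
         (sl_part C \<subseteq> sl_part D \<longleftrightarrow> C \<subseteq> D)"
proof -
  have C: "category C" "pair_positioner \<in> C" and D: "category D" "pair_positioner \<in> D"
    using assms by (auto simp: simplifiable_hyperoctahedral_def hyperoctahedral_def)
  have "sl_part C \<subseteq> sl_part D \<longleftrightarrow> C \<subseteq> D" and "sl_part D \<subseteq> sl_part C \<longleftrightarrow> D \<subseteq> C"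
    using sl_part_subset_iff C D by blast+
  then show ?thesis using generated_sl_part[OF C] by blast
qed

end
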